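(* (a) For each $f\in\mathcal{F}_\mathrm{convex}^\nearrow(0,\infty)$ define $\hat f(t):=\sup_{x>0}\{xt-f(x)\}$ for $t\in(0,\infty)$. Then $\hat f\in\mathcal{F}_\mathrm{convex}^\nearrow(0,\infty)$, and $f\mapsto\hat f$ is an involutive bijection on $\mathcal{F}_\mathrm{convex}^\nearrow(0,\infty)$, i.e., $\hat{\hat f}=f$ for all $f\in\mathcal{F}_\mathrm{convex}^\nearrow(0,\infty)$. (b) For every $f\in\mathcal{F}_\mathrm{convex}^\nearrow(0,\infty)$ and every $B\in\mathbb{M}_n^+$, $$\mathrm{Tr}\, f(B)=\sup_{A\in\mathbb{P}_n}\{\mathrm{Tr}\, AB-\mathrm{Tr}\,\hat f(A)\},$$ where $f$ is continuously extended to $[0,\infty)$. (c) Let $f$ be a non-constant, non-decreasing function on $(0,\infty)$ and $0<r<1$. Then $x\mapsto f(x^{1-r})$ is convex on $(0,\infty)$ if and only if $f\in\mathcal{F}_\mathrm{convex}^\nearrow(0,\infty)$ and $x\mapsto\hat f(x^r)$ is concave on $(0,\infty)$.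
   Context: $\mathcal{F}_\mathrm{convex}^\nearrow(0,\infty)$ is the set of non-decreasing convex real functions $f$ on $(0,\infty)$ such that $\lim_{x\to\infty}f(x)/x=+\infty$. $\mathbb{M}_n^+$: positive semidefinite $n\times n$ complex matrices; $\mathbb{P}_n$: positive definite ones; $\mathrm{Tr}$: usual trace. *)

theory Defs
  imports "HOL-Analysis.Analysis"
begin

text \<open>Functions on (0,infinity) are represented as total functions real => real;
  only their values on {0<..} matter.\<close>

definition F_convex_incr :: "(real \<Rightarrow> real) \<Rightarrow> bool" where
  "F_convex_incr f \<longleftrightarrow>
     mono_on {0<..} f \<and> convex_on {0<..} f \<and>
     filterlim (\<lambda>x. f x / x) at_top at_top"

definition conj_fun :: "(real \<Rightarrow> real) \<Rightarrow> real \<Rightarrow> real" where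
  "conj_fun f t = (SUP x\<in>{0<..}. x * t - f x)"

definition ext0 :: "(real \<Rightarrow> real) \<Rightarrow> real \<Rightarrow> real" where
  "ext0 f x = (if 0 < x then f x else Lim (at_right 0) f)"

definition adjoint_mat :: "complex^'n^'n \<Rightarrow> complex^'n^'n" where
  "adjoint_mat A = (\<chi> i j. cnj (A $ j $ i))"

definition unitary_mat :: "complex^'n^'n \<Rightarrow> bool" where
  "unitary_mat U \<longleftrightarrow> adjoint_mat U ** U = mat 1"

definition hermitian_mat :: "complex^'n^'n \<Rightarrow> bool" where
  "hermitian_mat A \<longleftrightarrow> adjoint_mat A = A"

definition quad_form :: "complex^'n^'n \<Rightarrow> complex^'n \<Rightarrow> complex" where
  "quad_form A x = (\<Sum>i\<in>UNIV. cnj (x $ i) * (A *v x) $ i)"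

definition psd_mat :: "complex^'n^'n \<Rightarrow> bool" where
  "psd_mat A \<longleftrightarrow> hermitian_mat A \<and> (\<forall>x. 0 \<le> Re (quad_form A x))"

definition pd_mat :: "complex^'n^'n \<Rightarrow> bool" where
  "pd_mat A \<longleftrightarrow> hermitian_mat A \<and> (\<forall>x. x \<noteq> 0 \<longrightarrow> 0 < Re (quad_form A x))"

definition diag_mat :: "('n \<Rightarrow> complex) \<Rightarrow> complex^'n^'n" where
  "diag_mat d = (\<chi> i j. if i = j then d i else 0)"

text \<open>Functional calculus for Hermitian matrices via a unitary diagonalisation
  A = U diag(lambda) U^*, giving f(A) = U diag(f(lambda)) U^* (independent of the choice).\<close>
definition mat_fun :: "(real \<Rightarrow> real) \<Rightarrow> complex^'n^'n \<Rightarrow> complex^'n^'n" where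
  "mat_fun f A = (SOME M. \<exists>U (lam :: 'n \<Rightarrow> real).
      unitary_mat U \<and> A = U ** diag_mat (\<lambda>i. complex_of_real (lam i)) ** adjoint_mat U \<and>
      M = U ** diag_mat (\<lambda>i. complex_of_real (f (lam i))) ** adjoint_mat U)"

end

theory Submission
  imports Defs
begin

text \<open>(a) is Fenchel--Moreau duality on \<open>(0,\<infinity>)\<close>: superlinear growth keeps the supremum finite,
  and a supporting line of \<open>f\<close>, tilted to a strictly positive slope at an arbitrarily small cost,
  shows that \<open>f\<close> equals its biconjugate.

  (b) Write \<open>g = conj_fun f\<close>, \<open>A = V diag(a) V*\<close> and \<open>B = U diag(b) U*\<close>. Then
  \<open>Tr (A B) = (\<Sum>i k. a i * b k * \<bar>W i k\<bar>^2)\<close> with \<open>W = V* U\<close> unitary, so the weights \<open>\<bar>W i k\<bar>^2\<close> are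
  doubly stochastic and the scalar Fenchel--Young inequality \<open>a * b \<le> g a + f b\<close> gives
  \<open>Tr (A B) - Tr g(A) \<le> Tr f(B)\<close>. Near-equality is attained by matrices \<open>A\<close> with the eigenvectors
  of \<open>B\<close> and near-optimal dual points as eigenvalues.

  (c) Put \<open>p = 1 - r\<close>. Since \<open>x * s powr r = (x powr (1/p)) powr p * s powr r\<close>, the joint concavity
  of \<open>(u, v) \<mapsto> u powr p * v powr r\<close> and the convexity of \<open>y \<mapsto> f (y powr p)\<close> exhibit
  \<open>g (s powr r)\<close> as a supremum of jointly concave expressions, hence concave. Conversely
  \<open>f (y powr p) = (SUP t. t * y powr p - g t)\<close>, and the substitution \<open>t = (y * w) powr r\<close> turns
  concavity of \<open>g (s powr r)\<close> into convexity of \<open>f (y powr p)\<close>. Convexity of \<open>f (y powr p)\<close> also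
  makes \<open>f\<close> convex (a monotone convex function of the convex \<open>x powr (1/p)\<close>) and, as \<open>1/p > 1\<close>,
  superlinear unless it is constant.\<close>

section \<open>The Legendre transform on \<open>(0,\<infinity>)\<close>\<close>

lemma F_convex_incrD:
  assumes "F_convex_incr f"
  shows "mono_on {0<..} f" "convex_on {0<..} f" "filterlim (\<lambda>x. f x / x) at_top at_top"
  using assms unfolding F_convex_incr_def by auto

lemma F_convex_incr_ge_linear:
  assumes "F_convex_incr f"
  obtains N where "N > 0" "\<And>x. x \<ge> N \<Longrightarrow> M * x \<le> f x"
proof -
  have "eventually (\<lambda>x. M \<le> f x / x) at_top"
    using F_convex_incrD(3)[OF assms] unfolding filterlim_at_top by blast
  then obtain N where N: "\<And>x. x \<ge> N \<Longrightarrow> M \<le> f x / x"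
    by (auto simp: eventually_at_top_linorder)
  show thesis
  proof
    fix x assume "max N 1 \<le> x"
    then have "x > 0" "M \<le> f x / x" using N by auto
    then show "M * x \<le> f x" by (simp add: le_divide_eq)
  qed simp
qed

lemma F_convex_incr_lower_bound:
  assumes "F_convex_incr f" and x: "x > 0"
  shows "2 * f 1 - f 2 \<le> f x"
proof -
  have mono: "mono_on {0<..} f" and cv: "convex_on {0<..} f" using F_convex_incrD[OF assms(1)] by auto
  have f12: "f 1 \<le> f 2" using mono by (auto intro: mono_onD)
  show ?thesis
  proof (cases "x \<ge> 1")
    case True
    then have "f 1 \<le> f x" using mono by (auto intro: mono_onD)
    then show ?thesis using f12 by simp
  next
    case False
    have "(f x - f 2) / (x - 2) \<le> (f 1 - f 2) / (1 - 2)"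
      using convex_on_slope_le(2)[OF cv, of x 2 1] x False by auto
    then have "f x - f 2 \<ge> (f 1 - f 2) / (1 - 2) * (x - 2)"
      using False by (simp add: divide_le_eq)
    moreover have "(f 2 - f 1) * (x - 2) \<ge> (f 2 - f 1) * (-2)"
      using f12 x by (intro mult_left_mono) auto
    ultimately show ?thesis by simp
  qed
qed

lemma bdd_above_conj_fun:
  assumes F: "F_convex_incr f" and t: "t > 0"
  shows "bdd_above ((\<lambda>x. x * t - f x) ` {0<..})"
proof -
  obtain N where N: "N > 0" "\<And>x. x \<ge> N \<Longrightarrow> t * x \<le> f x"
    using F_convex_incr_ge_linear[OF F, where M = t] by blast
  show ?thesis
  proof (rule bdd_aboveI2)
    fix x :: real assume "x \<in> {0<..}"
    then have x: "x > 0" by simp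
    show "x * t - f x \<le> max 0 (N * t - (2 * f 1 - f 2))"
    proof (cases "x \<ge> N")
      case True then show ?thesis using N(2)[of x] by (simp add: mult.commute)
    next
      case False
      then have "x * t \<le> N * t" using t by (intro mult_right_mono) auto
      then show ?thesis using F_convex_incr_lower_bound[OF F x] by simp
    qed
  qed
qed

lemma conj_fun_ge:
  assumes "F_convex_incr f" and "t > 0" and "x > 0"
  shows "x * t - f x \<le> conj_fun f t"
  unfolding conj_fun_def using bdd_above_conj_fun[OF assms(1,2)] assms(3) by (intro cSUP_upper) auto

lemma conj_fun_le:
  assumes "\<And>x. x > 0 \<Longrightarrow> x * t - f x \<le> c"
  shows "conj_fun f t \<le> c"
  unfolding conj_fun_def using assms by (intro cSUP_least) auto

lemma mono_on_conj_fun: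
  assumes F: "F_convex_incr f"
  shows "mono_on {0<..} (conj_fun f)"
proof (rule mono_onI)
  fix s t :: real assume "s \<in> {0<..}" "t \<in> {0<..}" "s \<le> t"
  then show "conj_fun f s \<le> conj_fun f t"
  proof (intro conj_fun_le)
    fix x :: real assume x: "x > 0"
    have "x * s - f x \<le> x * t - f x" using x \<open>s \<le> t\<close> by (simp add: mult_left_mono)
    also have "\<dots> \<le> conj_fun f t" using conj_fun_ge[OF F _ x, of t] \<open>t \<in> {0<..}\<close> by simp
    finally show "x * s - f x \<le> conj_fun f t" .
  qed
qed

lemma convex_on_conj_fun:
  assumes F: "F_convex_incr f"
  shows "convex_on {0<..} (conj_fun f)"
proof (rule convex_onI)
  fix u s t :: real assume u: "u > 0" "u < 1" and s: "s \<in> {0<..}" and t: "t \<in> {0<..}"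
  show "conj_fun f ((1 - u) *\<^sub>R s + u *\<^sub>R t) \<le> (1 - u) * conj_fun f s + u * conj_fun f t"
  proof (rule conj_fun_le)
    fix x :: real assume x: "x > 0"
    have "x * ((1 - u) *\<^sub>R s + u *\<^sub>R t) - f x = (1 - u) * (x * s - f x) + u * (x * t - f x)"
      by (simp add: algebra_simps)
    also have "\<dots> \<le> (1 - u) * conj_fun f s + u * conj_fun f t"
      using conj_fun_ge[OF F _ x, of s] conj_fun_ge[OF F _ x, of t] s t u
      by (intro add_mono mult_left_mono) auto
    finally show "x * ((1 - u) *\<^sub>R s + u *\<^sub>R t) - f x \<le> (1 - u) * conj_fun f s + u * conj_fun f t" .
  qed
qed (simp add: convex_real_interval)

lemma conj_fun_superlinear:
  assumes F: "F_convex_incr f"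
  shows "filterlim (\<lambda>t. conj_fun f t / t) at_top at_top"
  unfolding filterlim_at_top
proof
  fix Z :: real
  define x where "x = \<bar>Z\<bar> + 1"
  have x: "x > 0" unfolding x_def by simp
  show "eventually (\<lambda>t. Z \<le> conj_fun f t / t) at_top"
    unfolding eventually_at_top_linorder
  proof (intro exI[of _ "\<bar>f x\<bar> + 1"] allI impI)
    fix t assume t: "\<bar>f x\<bar> + 1 \<le> t"
    then have tp: "t > 0" by linarith
    have "x * t - f x \<le> conj_fun f t" using conj_fun_ge[OF F tp x] .
    moreover have "f x \<le> t" using t by linarith
    moreover have "Z * t \<le> (x - 1) * t" using tp unfolding x_def by (intro mult_right_mono) auto
    ultimately have "Z * t \<le> conj_fun f t" by (simp add: algebra_simps)
    then show "Z \<le> conj_fun f t / t" using tp by (simp add: le_divide_eq)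
  qed
qed

lemma F_convex_incr_conj_fun:
  assumes "F_convex_incr f"
  shows "F_convex_incr (conj_fun f)"
  unfolding F_convex_incr_def
  using mono_on_conj_fun[OF assms] convex_on_conj_fun[OF assms] conj_fun_superlinear[OF assms] by auto

lemma F_convex_incr_supporting_line:
  assumes F: "F_convex_incr f" and x: "x > 0"
  obtains d where "d \<ge> 0" "\<And>y. y > 0 \<Longrightarrow> f x + d * (y - x) \<le> f y"
proof -
  have mono: "mono_on {0<..} f" and cv: "convex_on {0<..} f" using F_convex_incrD[OF F] by auto
  define D where "D = (\<lambda>z. (f z - f x) / (z - x)) ` {x<..}"
  define d where "d = Inf D"
  have slopes: "(f y - f x) / (y - x) \<le> (f z - f x) / (z - x)" if "0 < y" "y < x" "x < z" for y z
  proof -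
    have "(f y - f x) / (y - x) \<le> (f y - f z) / (y - z)"
      using convex_on_slope_le(1)[OF cv, of y z x] that by auto
    also have "\<dots> \<le> (f x - f z) / (x - z)"
      using convex_on_slope_le(2)[OF cv, of y z x] that by auto
    also have "\<dots> = (f z - f x) / (z - x)" by (simp add: divide_simps) argo
    finally show ?thesis .
  qed
  have bdd: "bdd_below D"
    unfolding D_def using slopes[of "x/2"] x by (intro bdd_belowI2) auto
  have "0 \<le> d" unfolding d_def
  proof (rule cInf_greatest)
    fix e assume "e \<in> D"
    then obtain z where z: "z > x" "e = (f z - f x) / (z - x)" unfolding D_def by auto
    have "f x \<le> f z" using mono z x by (auto intro: mono_onD)
    then show "0 \<le> e" using z by simp
  qed (simp add: D_def)
  moreover have "f x + d * (y - x) \<le> f y" if y: "y > 0" for y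
  proof (cases y x rule: linorder_cases)
    case greater
    have "d \<le> (f y - f x) / (y - x)" unfolding d_def using bdd greater
      by (intro cInf_lower) (auto simp: D_def)
    then show ?thesis using greater by (simp add: le_divide_eq algebra_simps)
  next
    case less
    have "(f y - f x) / (y - x) \<le> d" unfolding d_def
      by (intro cInf_greatest) (auto simp: D_def intro!: slopes y less)
    then show ?thesis using less by (simp add: divide_le_eq algebra_simps)
  qed simp
  ultimately show thesis using that by blast
qed

text \<open>A supporting slope \<open>d\<close> at \<open>x\<close> may be \<open>0\<close>, which lies outside the domain of
  \<open>conj_fun f\<close>; tilting it by a small \<open>\<eta> > 0\<close> costs at most \<open>e\<close>, because superlinear growth
  confines the competitors \<open>y\<close> to a bounded interval.\<close>
lemma F_convex_incr_almost_supporting_slope: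
  assumes F: "F_convex_incr f" and x: "x > 0" and e: "e > 0"
  obtains t where "t > 0" "\<And>y. y > 0 \<Longrightarrow> y * t - f y \<le> x * t - f x + e"
proof -
  obtain d where d: "d \<ge> 0" "\<And>y. y > 0 \<Longrightarrow> f x + d * (y - x) \<le> f y"
    using F_convex_incr_supporting_line[OF F x] by blast
  obtain N where N: "N > 0" "\<And>y. y \<ge> N \<Longrightarrow> (d + 2) * y \<le> f y"
    using F_convex_incr_ge_linear[OF F, where M = "d + 2"] by blast
  define Y where "Y = max (max N (x + 1)) \<bar>f x\<bar>"
  define \<eta> where "\<eta> = min 1 (e / (Y - x))"
  have Yx: "Y - x \<ge> 1" unfolding Y_def by auto
  have \<eta>: "\<eta> > 0" "\<eta> \<le> 1" "\<eta> * (Y - x) \<le> e"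
    unfolding \<eta>_def using e Yx by (auto simp: min_def le_divide_eq)
  show thesis
  proof
    show "d + \<eta> > 0" using d \<eta> by simp
    fix y :: real assume y: "y > 0"
    show "y * (d + \<eta>) - f y \<le> x * (d + \<eta>) - f x + e"
    proof (cases "y \<ge> Y")
      case True
      then have "(d + 2) * y \<le> f y" using N(2)[of y] unfolding Y_def by auto
      moreover have "y * (d + \<eta>) \<le> y * (d + 1)" using y \<eta> by (intro mult_left_mono) auto
      moreover have "\<bar>f x\<bar> \<le> y" using True unfolding Y_def by auto
      moreover have "0 \<le> x * (d + \<eta>)" using x d \<eta> by simp
      ultimately show ?thesis using e by (simp add: algebra_simps)
    next
      case False
      have "\<eta> * (y - x) \<le> e"
      proof (cases "y \<le> x")
        case True then show ?thesis using \<eta> e by (smt (verit) mult_nonneg_nonpos)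
      next
        case False
        have "\<eta> * (y - x) \<le> \<eta> * (Y - x)" using \<open>\<not> y \<ge> Y\<close> \<eta> by (intro mult_left_mono) auto
        then show ?thesis using \<eta> by linarith
      qed
      then show ?thesis using d(2)[OF y] by (simp add: algebra_simps)
    qed
  qed
qed

lemma conj_fun_conj_fun:
  assumes F: "F_convex_incr f" and x: "x > 0"
  shows "conj_fun (conj_fun f) x = f x"
proof (rule antisym)
  show "conj_fun (conj_fun f) x \<le> f x"
  proof (rule conj_fun_le)
    fix t :: real assume t: "t > 0"
    show "t * x - conj_fun f t \<le> f x" using conj_fun_ge[OF F t x] by (simp add: mult.commute)
  qed
  show "f x \<le> conj_fun (conj_fun f) x"
  proof (rule field_le_epsilon)
    fix e :: real assume e: "e > 0"
    obtain t where t: "t > 0" "\<And>y. y > 0 \<Longrightarrow> y * t - f y \<le> x * t - f x + e"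
      using F_convex_incr_almost_supporting_slope[OF F x e] by blast
    have "conj_fun f t \<le> x * t - f x + e" using t by (intro conj_fun_le) auto
    then have "f x - e \<le> t * x - conj_fun f t" by (simp add: algebra_simps)
    also have "\<dots> \<le> conj_fun (conj_fun f) x"
      using conj_fun_ge[OF F_convex_incr_conj_fun[OF F] x t(1)] by simp
    finally show "f x \<le> conj_fun (conj_fun f) x + e" by simp
  qed
qed

section \<open>Convexity of \<open>f (x powr (1 - r))\<close> versus concavity of \<open>conj_fun f (x powr r)\<close>\<close>

lemma powr_one_minus_mult_powr:
  fixes a w r :: real
  assumes "a > 0" "w > 0"
  shows "a powr (1 - r) * (a * w) powr r = a * w powr r"
proof -
  have "a powr (1 - r) * (a * w) powr r = (a powr (1 - r) * a powr r) * w powr r"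
    using assms by (simp add: powr_mult)
  also have "a powr (1 - r) * a powr r = a"
    using assms by (simp add: powr_add[symmetric])
  finally show ?thesis .
qed

lemma weighted_geometric_mean_concave:
  fixes a1 a2 b1 b2 u r :: real
  assumes a: "a1 > 0" "a2 > 0" and b: "b1 > 0" "b2 > 0" and u: "0 \<le> u" "u \<le> 1"
    and r: "0 \<le> r" "r \<le> 1"
  shows "(1 - u) * (a1 powr (1 - r) * b1 powr r) + u * (a2 powr (1 - r) * b2 powr r)
     \<le> ((1 - u) * a1 + u * a2) powr (1 - r) * ((1 - u) * b1 + u * b2) powr r"
proof -
  define A where "A = (1 - u) * a1 + u * a2"
  define B where "B = (1 - u) * b1 + u * b2"
  have A: "A > 0" unfolding A_def using a u
    by (cases "u = 0") (auto intro: add_nonneg_pos add_pos_nonneg)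
  have B: "B > 0" unfolding B_def using b u
    by (cases "u = 0") (auto intro: add_nonneg_pos add_pos_nonneg)
  define K where "K = A powr (1 - r) * B powr r"
  have K: "K > 0" unfolding K_def using A B by simp
  \<comment> \<open>Young's inequality after normalising by the means \<open>A\<close> and \<open>B\<close>\<close>
  have Young: "x powr (1 - r) * y powr r \<le> K * ((1 - r) * (x / A) + r * (y / B))"
    if "x > 0" "y > 0" for x y
  proof -
    have "x powr (1 - r) * y powr r = K * ((x / A) powr (1 - r) * (y / B) powr r)"
      unfolding K_def using that A B by (simp add: powr_divide field_simps)
    also have "\<dots> \<le> K * ((1 - r) * (x / A) + r * (y / B))"
      using Youngs_inequality_0[of "1 - r" r "x / A" "y / B"] that A B r K
      by (intro mult_left_mono) auto
    finally show ?thesis .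
  qed
  have "(1 - u) * (a1 powr (1 - r) * b1 powr r) + u * (a2 powr (1 - r) * b2 powr r)
      \<le> (1 - u) * (K * ((1 - r) * (a1 / A) + r * (b1 / B))) + u * (K * ((1 - r) * (a2 / A) + r * (b2 / B)))"
    using Young[OF a(1) b(1)] Young[OF a(2) b(2)] u by (intro add_mono mult_left_mono) auto
  also have "\<dots> = K * ((1 - r) * (((1 - u) * a1 + u * a2) / A) + r * (((1 - u) * b1 + u * b2) / B))"
    using A B by (simp add: field_simps)
  also have "\<dots> = K" using A B unfolding A_def[symmetric] B_def[symmetric] by simp
  finally show ?thesis unfolding K_def A_def B_def .
qed

lemma convex_on_mono_comp:
  fixes h :: "'a::real_vector \<Rightarrow> real"
  assumes h: "convex_on S h" and g: "convex_on T g" "mono_on T g" and hT: "h ` S \<subseteq> T"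
  shows "convex_on S (\<lambda>x. g (h x))"
proof (rule convex_onI)
  fix t :: real and x y assume t: "0 < t" "t < 1" and xy: "x \<in> S" "y \<in> S"
  have S: "convex S" and T: "convex T" using h g by (auto simp: convex_on_def)
  have "(1 - t) *\<^sub>R x + t *\<^sub>R y \<in> S" using convexD[OF S xy, of "1 - t" t] t by simp
  moreover have "(1 - t) * h x + t * h y \<in> T"
    using convexD[OF T, of "h x" "h y" "1 - t" t] hT xy t by auto
  ultimately have "g (h ((1 - t) *\<^sub>R x + t *\<^sub>R y)) \<le> g ((1 - t) * h x + t * h y)"
    using convex_onD[OF h, of t x y] t xy hT by (intro mono_onD[OF g(2)]) auto
  also have "\<dots> \<le> (1 - t) * g (h x) + t * g (h y)"
    using convex_onD[OF g(1), of t "h x" "h y"] t xy hT by auto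
  finally show "g (h ((1 - t) *\<^sub>R x + t *\<^sub>R y)) \<le> (1 - t) * g (h x) + t * g (h y)" .
qed (use h in \<open>simp add: convex_on_def\<close>)

lemma convex_on_above_secant:
  fixes G :: "real \<Rightarrow> real"
  assumes G: "convex_on I G" and I: "x1 \<in> I" "x \<in> I" and x: "x1 < x2" "x2 \<le> x" "x2 \<in> I"
  shows "G x2 + (G x2 - G x1) / (x2 - x1) * (x - x2) \<le> G x"
proof (cases "x = x2")
  case False
  with x have xx: "x > x2" by simp
  have "(G x1 - G x2) / (x1 - x2) \<le> (G x1 - G x) / (x1 - x)"
    using convex_on_slope_le(1)[OF G, of x1 x x2] I x xx by auto
  also have "\<dots> \<le> (G x2 - G x) / (x2 - x)"
    using convex_on_slope_le(2)[OF G, of x1 x x2] I x xx by auto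
  finally have "(G x2 - G x1) / (x2 - x1) \<le> (G x - G x2) / (x - x2)"
    by (smt (verit, ccfv_SIG) minus_divide_divide)
  then show ?thesis using xx by (simp add: le_divide_eq algebra_simps)
qed simp

lemma filterlim_powr_at_top:
  fixes q :: real
  assumes "q > 0"
  shows "filterlim (\<lambda>y. y powr q) at_top at_top"
proof -
  have "filterlim (\<lambda>y. exp (q * ln y)) at_top at_top"
    by (intro filterlim_compose[OF exp_at_top] filterlim_tendsto_pos_mult_at_top[OF tendsto_const assms]
        ln_at_top)
  then show ?thesis
    by (rule filterlim_cong[THEN iffD1, rotated -1])
      (auto simp: powr_def eventually_at_top_linorder intro!: exI[of _ 1])
qed

lemma superlinear_if_ge_powr:
  fixes f :: "real \<Rightarrow> real"
  assumes s: "s > 0" and e: "e > 1" and ge: "eventually (\<lambda>y. C + s * y powr e \<le> f y) at_top"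
  shows "filterlim (\<lambda>y. f y / y) at_top at_top"
proof (rule filterlim_at_top_mono)
  show "filterlim (\<lambda>y. C / y + s * y powr (e - 1)) at_top at_top"
  proof (rule filterlim_tendsto_add_at_top)
    show "((\<lambda>y. C / y) \<longlongrightarrow> 0) at_top"
      by (intro tendsto_divide_0[OF tendsto_const] filterlim_at_top_imp_at_infinity filterlim_ident)
    show "filterlim (\<lambda>y. s * y powr (e - 1)) at_top at_top"
      using e by (intro filterlim_tendsto_pos_mult_at_top[OF tendsto_const s] filterlim_powr_at_top) auto
  qed
  show "eventually (\<lambda>y. C / y + s * y powr (e - 1) \<le> f y / y) at_top"
    using ge eventually_gt_at_top[of 0]
  proof eventually_elim
    case (elim y)
    then have "C / y + s * y powr (e - 1) = (C + s * y powr e) / y"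
      by (simp add: powr_diff field_simps)
    with elim show ?case by (simp add: divide_right_mono)
  qed
qed

lemma SUP_convex_comb_le:
  fixes \<phi> \<psi> :: "'a \<Rightarrow> real"
  assumes X: "X \<noteq> {}" and u: "0 < u" "u < 1"
    and le: "\<And>x y. x \<in> X \<Longrightarrow> y \<in> X \<Longrightarrow> (1 - u) * \<phi> x + u * \<psi> y \<le> c"
  shows "(1 - u) * (SUP x\<in>X. \<phi> x) + u * (SUP y\<in>X. \<psi> y) \<le> c"
proof -
  have "(SUP y\<in>X. \<psi> y) \<le> (c - (1 - u) * \<phi> x) / u" if x: "x \<in> X" for x
    using X le[OF x] u by (intro cSUP_least) (auto simp: le_divide_eq algebra_simps)
  then have "(SUP x\<in>X. \<phi> x) \<le> (c - u * (SUP y\<in>X. \<psi> y)) / (1 - u)"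
    using X u by (intro cSUP_least) (auto simp: le_divide_eq divide_le_eq algebra_simps)
  then show ?thesis using u by (simp add: le_divide_eq algebra_simps)
qed

lemma convex_powr_comp_if_conj_powr_concave:
  assumes F: "F_convex_incr f" and r: "0 < r"
    and H: "concave_on {0<..} (\<lambda>x. conj_fun f (x powr r))"
  shows "convex_on {0<..} (\<lambda>x. f (x powr (1 - r)))"
proof (rule convex_onI)
  define H where "H = (\<lambda>x. conj_fun f (x powr r))"
  fix u y1 y2 :: real assume u: "0 < u" "u < 1" and y1: "y1 \<in> {0<..}" and y2: "y2 \<in> {0<..}"
  define y where "y = (1 - u) * y1 + u * y2"
  have y: "y > 0" unfolding y_def using u y1 y2 by (simp add: add_pos_pos)
  have Hconc: "(1 - u) * H a + u * H b \<le> H ((1 - u) * a + u * b)" if "a > 0" "b > 0" for a b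
    using H that u unfolding concave_on_iff H_def by (auto simp: mult.commute)
  have Young: "z * w powr r - H (z * w) \<le> f (z powr (1 - r))" if "z > 0" "w > 0" for z w
  proof -
    have "z * w powr r = z powr (1 - r) * (z * w) powr r" using powr_one_minus_mult_powr[OF that] by simp
    moreover have "z powr (1 - r) * (z * w) powr r - f (z powr (1 - r)) \<le> H (z * w)"
      unfolding H_def using that by (intro conj_fun_ge[OF F]) auto
    ultimately show ?thesis by simp
  qed
  have "f (y powr (1 - r)) = conj_fun (conj_fun f) (y powr (1 - r))"
    using conj_fun_conj_fun[OF F, of "y powr (1 - r)"] y by simp
  also have "\<dots> \<le> (1 - u) * f (y1 powr (1 - r)) + u * f (y2 powr (1 - r))"
  proof (rule conj_fun_le)
    fix t :: real assume t: "t > 0"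
    \<comment> \<open>rescale so that the dual variable becomes \<open>t = (y * w) powr r\<close>\<close>
    define w where "w = t powr (1 / r) / y"
    have w: "w > 0" unfolding w_def using t y by simp
    have yw: "(y * w) powr r = t" unfolding w_def using y t r by (simp add: powr_powr)
    have "t * y powr (1 - r) - conj_fun f t = y * w powr r - H (y * w)"
      using powr_one_minus_mult_powr[OF y w, of r] yw unfolding H_def by (simp add: mult.commute)
    also have "\<dots> \<le> (1 - u) * (y1 * w powr r - H (y1 * w)) + u * (y2 * w powr r - H (y2 * w))"
      using Hconc[of "y1 * w" "y2 * w"] y1 y2 w unfolding y_def by (simp add: algebra_simps)
    also have "\<dots> \<le> (1 - u) * f (y1 powr (1 - r)) + u * f (y2 powr (1 - r))"
      using Young[of y1 w] Young[of y2 w] y1 y2 w u by (intro add_mono mult_left_mono) auto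
    finally show "t * y powr (1 - r) - conj_fun f t \<le> (1 - u) * f (y1 powr (1 - r)) + u * f (y2 powr (1 - r))" .
  qed
  finally show "f (((1 - u) *\<^sub>R y1 + u *\<^sub>R y2) powr (1 - r))
      \<le> (1 - u) * f (y1 powr (1 - r)) + u * f (y2 powr (1 - r))" unfolding y_def by simp
qed (simp add: convex_real_interval)

lemma convex_on_if_convex_powr_comp:
  fixes f :: "real \<Rightarrow> real"
  assumes mono: "mono_on {0<..} f" and p: "0 < p" "p \<le> 1"
    and G: "convex_on {0<..} (\<lambda>x. f (x powr p))"
  shows "convex_on {0<..} f"
proof -
  have G_mono: "mono_on {0<..} (\<lambda>x. f (x powr p))"
  proof (rule mono_onI)
    fix x y :: real assume "x \<in> {0<..}" "y \<in> {0<..}" "x \<le> y"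
    then show "f (x powr p) \<le> f (y powr p)"
      using p by (intro mono_onD[OF mono]) (auto intro: powr_mono2)
  qed
  have comp: "convex_on {0<..} (\<lambda>x. f ((x powr (1 / p)) powr p))"
    using p by (intro convex_on_mono_comp[OF powr_convex G G_mono]) auto
  show ?thesis
  proof (rule convex_onI)
    fix t x y :: real assume t: "0 < t" "t < 1" and xy: "x \<in> {0<..}" "y \<in> {0<..}"
    have "(1 - t) *\<^sub>R x + t *\<^sub>R y > 0" using t xy by (simp add: add_pos_pos)
    then show "f ((1 - t) *\<^sub>R x + t *\<^sub>R y) \<le> (1 - t) * f x + t * f y"
      using convex_onD[OF comp, of t x y] t xy p by (simp add: powr_powr)
  qed (simp add: convex_real_interval)
qed

lemma superlinear_if_convex_powr_comp:
  fixes f :: "real \<Rightarrow> real"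
  assumes mono: "mono_on {0<..} f" and nonconst: "\<exists>x>0. \<exists>y>0. f x \<noteq> f y"
    and p: "0 < p" "p < 1" and G: "convex_on {0<..} (\<lambda>x. f (x powr p))"
  shows "filterlim (\<lambda>x. f x / x) at_top at_top"
proof -
  obtain a b where ab: "0 < a" "a < b" "f a < f b"
    using nonconst mono
    by (metis linorder_neqE_linordered_idom mono_onD greaterThan_iff order_less_le)
  define x1 where "x1 = a powr (1 / p)"
  define x2 where "x2 = b powr (1 / p)"
  have x12: "0 < x1" "x1 < x2" unfolding x1_def x2_def using ab p by (auto intro: powr_less_mono2)
  have f_eq: "f y = f ((y powr (1 / p)) powr p)" if "y > 0" for y
    using that p by (simp add: powr_powr)
  define s where "s = (f b - f a) / (x2 - x1)"
  have s: "s > 0" unfolding s_def using x12 ab by simp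
  \<comment> \<open>beyond \<open>b\<close>, \<open>f y\<close> dominates an affine function of \<open>y powr (1/p)\<close>, and \<open>1/p > 1\<close>\<close>
  have "eventually (\<lambda>y. (f b - s * x2) + s * y powr (1 / p) \<le> f y) at_top"
    using eventually_ge_at_top[of b]
  proof eventually_elim
    case (elim y)
    have "x2 \<le> y powr (1 / p)" unfolding x2_def using elim ab p by (intro powr_mono2) auto
    then have "f (x2 powr p) + (f (x2 powr p) - f (x1 powr p)) / (x2 - x1) * (y powr (1 / p) - x2)
        \<le> f ((y powr (1 / p)) powr p)"
      using x12 by (intro convex_on_above_secant[OF G]) auto
    moreover have "x1 powr p = a" "x2 powr p = b" unfolding x1_def x2_def using ab p by (auto simp: powr_powr)
    ultimately have "f b + s * (y powr (1 / p) - x2) \<le> f y"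
      using f_eq[of y] elim ab unfolding s_def by simp
    then show ?case by (simp add: algebra_simps)
  qed
  then show ?thesis using s p by (intro superlinear_if_ge_powr) auto
qed

lemma conj_fun_powr_ge_convex_comb:
  assumes F: "F_convex_incr f" and r: "0 < r" "r < 1"
    and G: "convex_on {0<..} (\<lambda>x. f (x powr (1 - r)))"
    and u: "0 < u" "u < 1" and xs: "x1 > 0" "x2 > 0" "s1 > 0" "s2 > 0"
  shows "(1 - u) * (x1 * s1 powr r - f x1) + u * (x2 * s2 powr r - f x2)
    \<le> conj_fun f (((1 - u) * s1 + u * s2) powr r)"
proof -
  define p where "p = 1 - r"
  define k where "k = (\<lambda>x::real. x powr (1 / p))"
  have p: "0 < p" unfolding p_def using r by simp
  have k: "k x > 0" "k x powr p = x" if "x > 0" for x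
    unfolding k_def using that p by (auto simp: powr_powr)
  define y where "y = (1 - u) * k x1 + u * k x2"
  define s where "s = (1 - u) * s1 + u * s2"
  have y: "y > 0" unfolding y_def using k xs u by (intro add_pos_pos mult_pos_pos) auto
  have s: "s > 0" unfolding s_def using xs u by (intro add_pos_pos mult_pos_pos) auto
  have mean: "(1 - u) * (k x1 powr p * s1 powr r) + u * (k x2 powr p * s2 powr r) \<le> y powr p * s powr r"
    unfolding y_def s_def p_def using weighted_geometric_mean_concave[of "k x1" "k x2" s1 s2 u r] k xs u r
    by auto
  have conv: "f (y powr p) \<le> (1 - u) * f (k x1 powr p) + u * f (k x2 powr p)"
    using convex_onD[OF G, of u "k x1" "k x2"] u k xs unfolding y_def p_def by auto
  have "(1 - u) * (x1 * s1 powr r - f x1) + u * (x2 * s2 powr r - f x2)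
      = ((1 - u) * (k x1 powr p * s1 powr r) + u * (k x2 powr p * s2 powr r))
        - ((1 - u) * f (k x1 powr p) + u * f (k x2 powr p))"
    using k xs by (simp add: algebra_simps)
  also have "\<dots> \<le> y powr p * s powr r - f (y powr p)" using mean conv by simp
  also have "\<dots> \<le> conj_fun f (s powr r)" using y s by (intro conj_fun_ge[OF F]) auto
  finally show ?thesis unfolding s_def .
qed

lemma conj_powr_concave_if_convex_powr_comp:
  assumes F: "F_convex_incr f" and r: "0 < r" "r < 1"
    and G: "convex_on {0<..} (\<lambda>x. f (x powr (1 - r)))"
  shows "concave_on {0<..} (\<lambda>x. conj_fun f (x powr r))"
  unfolding concave_on_def
proof (rule convex_onI)
  fix u s1 s2 :: real assume u: "0 < u" "u < 1" and s: "s1 \<in> {0<..}" "s2 \<in> {0<..}"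
  have "(1 - u) * conj_fun f (s1 powr r) + u * conj_fun f (s2 powr r)
      \<le> conj_fun f (((1 - u) * s1 + u * s2) powr r)"
    unfolding conj_fun_def[of f "s1 powr r"] conj_fun_def[of f "s2 powr r"]
    using conj_fun_powr_ge_convex_comb[OF F r G u] s by (intro SUP_convex_comb_le u) auto
  then show "- conj_fun f (((1 - u) *\<^sub>R s1 + u *\<^sub>R s2) powr r)
      \<le> (1 - u) * - conj_fun f (s1 powr r) + u * - conj_fun f (s2 powr r)" by simp
qed (simp add: convex_real_interval)

lemma convex_powr_comp_iff:
  fixes f :: "real \<Rightarrow> real"
  assumes mono: "mono_on {0<..} f" and nonconst: "\<exists>x>0. \<exists>y>0. f x \<noteq> f y"
    and r: "0 < r" "r < 1"
  shows "convex_on {0<..} (\<lambda>x. f (x powr (1 - r))) \<longleftrightarrow>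
         F_convex_incr f \<and> concave_on {0<..} (\<lambda>x. conj_fun f (x powr r))"
proof
  assume G: "convex_on {0<..} (\<lambda>x. f (x powr (1 - r)))"
  have F: "F_convex_incr f" unfolding F_convex_incr_def
    using mono convex_on_if_convex_powr_comp[OF mono _ _ G] superlinear_if_convex_powr_comp[OF mono nonconst _ _ G] r
    by auto
  with conj_powr_concave_if_convex_powr_comp[OF F r G] show "F_convex_incr f \<and> concave_on {0<..} (\<lambda>x. conj_fun f (x powr r))"
    by blast
qed (use convex_powr_comp_if_conj_powr_concave r in blast)

section \<open>Unitary diagonalisation of Hermitian matrices\<close>

definition cinner :: "complex^'n \<Rightarrow> complex^'n \<Rightarrow> complex" where
  "cinner x y = (\<Sum>i\<in>UNIV. cnj (x$i) * y$i)"

lemma quad_form_cinner: "quad_form A x = cinner x (A *v x)"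
  by (simp add: quad_form_def cinner_def)

lemma cinner_add_right: "cinner x (y + z) = cinner x y + cinner x z"
  by (simp add: cinner_def sum.distrib distrib_left)
lemma cinner_add_left: "cinner (x + y) z = cinner x z + cinner y z"
  by (simp add: cinner_def sum.distrib distrib_right)
lemma cinner_diff_right: "cinner x (y - z) = cinner x y - cinner x z"
  by (simp add: cinner_def sum_subtractf right_diff_distrib)
lemma cinner_scale_right: "cinner x (c *s y) = c * cinner x y"
  by (simp add: cinner_def sum_distrib_left algebra_simps)
lemma cinner_scale_left: "cinner (c *s x) y = cnj c * cinner x y"
  by (simp add: cinner_def sum_distrib_left algebra_simps)
lemma cinner_zero_left [simp]: "cinner 0 y = 0" by (simp add: cinner_def)
lemma cinner_zero_right [simp]: "cinner x 0 = 0" by (simp add: cinner_def)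
lemma cinner_commute: "cinner y x = cnj (cinner x y)"
  by (simp add: cinner_def mult.commute)

lemma cnj_mult_self: "cnj z * z = complex_of_real ((cmod z)^2)"
  by (metis complex_norm_square mult.commute)

lemma cinner_self: "cinner x x = of_real ((norm x)^2)"
proof -
  have "(norm x)^2 = (\<Sum>i\<in>UNIV. (norm (x$i))^2)"
    unfolding norm_vec_def L2_set_def by (simp add: sum_nonneg)
  then have "complex_of_real ((norm x)^2) = (\<Sum>i\<in>UNIV. complex_of_real ((norm (x$i))^2))"
    by (simp only: of_real_sum)
  then show ?thesis unfolding cinner_def cnj_mult_self by simp
qed

lemma cinner_self_Re: "Re (cinner x x) = (norm x)^2"
  by (simp add: cinner_self)

lemma cinner_self_eq_0: "cinner x x = 0 \<longleftrightarrow> x = 0"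
  by (simp add: cinner_self)

lemma cinner_sum_right: "cinner x (\<Sum>i\<in>I. f i) = (\<Sum>i\<in>I. cinner x (f i))"
  by (induction I rule: infinite_finite_induct) (auto simp: cinner_add_right)

lemma cinner_adjoint: "cinner x (M *v y) = cinner (adjoint_mat M *v x) y"
proof -
  have "cinner x (M *v y) = (\<Sum>i\<in>UNIV. \<Sum>j\<in>UNIV. cnj (x$i) * M$i$j * y$j)"
    unfolding cinner_def matrix_vector_mult_def by (simp add: sum_distrib_left mult.assoc)
  also have "\<dots> = (\<Sum>j\<in>UNIV. \<Sum>i\<in>UNIV. cnj (x$i) * M$i$j * y$j)" by (rule sum.swap)
  also have "cinner (adjoint_mat M *v x) y = (\<Sum>j\<in>UNIV. \<Sum>i\<in>UNIV. cnj (x$i) * M$i$j * y$j)"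
    unfolding cinner_def matrix_vector_mult_def adjoint_mat_def
    by (simp add: sum_distrib_left mult_ac)
  finally show ?thesis by simp
qed

lemma hermitian_cinner: "hermitian_mat A \<Longrightarrow> cinner x (A *v y) = cinner (A *v x) y"
  using cinner_adjoint[of x A y] by (simp add: hermitian_mat_def)

lemma scaleR_eq_smult: "r *\<^sub>R (v::complex^'n) = complex_of_real r *s v"
  unfolding vec_eq_iff by (simp add: complex_eq_iff)

lemma matrix_vector_mult_smult: "A *v (c *s x) = c *s (A *v (x::complex^'n))"
  by (simp add: vec_eq_iff matrix_vector_mult_def sum_distrib_left algebra_simps)

lemma subspace_if_vec_subspace: "vec.subspace S \<Longrightarrow> subspace (S :: (complex^'n) set)"
  unfolding subspace_def vec.subspace_def by (auto simp: scaleR_eq_smult)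

lemma linear_coeff_zero_if_quadratic_nonpos:
  fixes a b :: real
  assumes "\<And>t. a * t + b * t^2 \<le> 0"
  shows "a = 0"
proof (rule ccontr)
  assume a: "a \<noteq> 0"
  define K where "K = \<bar>b\<bar> + 1"
  have K: "K > 0" unfolding K_def by simp
  define t where "t = a / (2 * K)"
  have "4 * K^2 * (a * t + b * t^2) = a^2 * (2 * K + b)"
    using K by (simp add: t_def field_simps power2_eq_square)
  moreover have "a^2 * (2 * K + b) > 0" using a unfolding K_def by (intro mult_pos_pos) auto
  moreover have "4 * K^2 * (a * t + b * t^2) \<le> 0"
    using assms[of t] K by (intro mult_nonneg_nonpos) auto
  ultimately show False by linarith
qed

lemma continuous_on_quad_form: "continuous_on UNIV (\<lambda>x::complex^'n. Re (quad_form A x))"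
  unfolding quad_form_def matrix_vector_mult_def by (intro continuous_intros)

lemma hermitian_quad_add_smult:
  assumes H: "hermitian_mat A"
  shows "Re (cinner (v + complex_of_real t *s w) (A *v (v + complex_of_real t *s w)))
     = Re (cinner v (A *v v)) + 2 * t * Re (cinner w (A *v v)) + t^2 * Re (cinner w (A *v w))"
proof -
  have c: "Re (cinner v (A *v w)) = Re (cinner w (A *v v))"
    using hermitian_cinner[OF H, of v w] cinner_commute[of "A *v v" w] by simp
  have "cinner (v + complex_of_real t *s w) (A *v (v + complex_of_real t *s w))
     = cinner v (A *v v) + complex_of_real t * cinner v (A *v w) + complex_of_real t * cinner w (A *v v)
       + complex_of_real t * complex_of_real t * cinner w (A *v w)"
    by (simp add: matrix_vector_right_distrib matrix_vector_mult_smult cinner_add_left cinner_add_right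
        cinner_scale_left cinner_scale_right algebra_simps)
  then show ?thesis using c by (simp add: power2_eq_square algebra_simps)
qed

lemma cinner_self_add_smult:
  shows "Re (cinner (v + complex_of_real t *s w) (v + complex_of_real t *s w))
     = Re (cinner v v) + 2 * t * Re (cinner w v) + t^2 * Re (cinner w w)"
proof -
  have c: "Re (cinner v w) = Re (cinner w v)"
    using cinner_commute[of v w] by simp
  have "cinner (v + complex_of_real t *s w) (v + complex_of_real t *s w)
     = cinner v v + complex_of_real t * cinner v w + complex_of_real t * cinner w v
       + complex_of_real t * complex_of_real t * cinner w w"
    by (simp add: cinner_add_left cinner_add_right cinner_scale_left cinner_scale_right algebra_simps)
  then show ?thesis using c by (simp add: power2_eq_square algebra_simps)
qed

lemma Re_quad_form_scaleR: "Re (quad_form A (r *\<^sub>R x)) = r^2 * Re (quad_form A x)"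
  unfolding quad_form_cinner scaleR_eq_smult matrix_vector_mult_smult cinner_scale_left cinner_scale_right
  by (simp add: power2_eq_square)

lemma rayleigh_maximiser_eigenvector:
  assumes H: "hermitian_mat A" and S: "vec.subspace S" and inv: "\<forall>x\<in>S. A *v x \<in> S"
    and v: "v \<in> S" "norm v = 1"
    and max: "\<And>x. x \<in> S \<Longrightarrow> Re (quad_form A x) \<le> Re (quad_form A v) * (norm x)^2"
  shows "A *v v = complex_of_real (Re (quad_form A v)) *s v"
proof -
  define l where "l = Re (quad_form A v)"
  define z where "z = A *v v - complex_of_real l *s v"
  \<comment> \<open>first variation of the Rayleigh quotient at its maximiser \<open>v\<close> in the direction \<open>w\<close>\<close>
  have Re0: "Re (cinner w z) = 0" if w: "w \<in> S" for w
  proof -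
    have "2 * (Re (cinner w (A *v v)) - l * Re (cinner w v)) * t
        + (Re (quad_form A w) - l * Re (cinner w w)) * t^2 \<le> 0" for t :: real
    proof -
      have "v + complex_of_real t *s w \<in> S"
        using v w S by (auto intro: vec.subspace_add vec.subspace_scale)
      then have "Re (quad_form A (v + complex_of_real t *s w))
          \<le> l * Re (cinner (v + complex_of_real t *s w) (v + complex_of_real t *s w))"
        using max unfolding l_def by (simp add: cinner_self_Re)
      then have "l + 2 * t * Re (cinner w (A *v v)) + t^2 * Re (quad_form A w)
          \<le> l * (1 + 2 * t * Re (cinner w v) + t^2 * Re (cinner w w))"
        unfolding quad_form_cinner hermitian_quad_add_smult[OF H] cinner_self_add_smult
        using v(2) by (simp add: cinner_self_Re l_def quad_form_cinner)
      then show ?thesis by (simp add: algebra_simps)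
    qed
    then have "2 * (Re (cinner w (A *v v)) - l * Re (cinner w v)) = 0"
      by (rule linear_coeff_zero_if_quadratic_nonpos)
    then show ?thesis unfolding z_def cinner_diff_right cinner_scale_right by simp
  qed
  have z_orth: "cinner w z = 0" if w: "w \<in> S" for w
  proof -
    have "\<i> *s w \<in> S" using w S by (auto intro: vec.subspace_scale)
    then have "Re (cinner (\<i> *s w) z) = 0" by (rule Re0)
    then have "Im (cinner w z) = 0" unfolding cinner_scale_left by simp
    then show ?thesis using Re0[OF w] by (simp add: complex_eq_iff)
  qed
  have "z \<in> S" unfolding z_def using inv v S by (auto intro: vec.subspace_diff vec.subspace_scale)
  then have "z = 0" using z_orth[of z] by (simp add: cinner_self_eq_0)
  then show ?thesis unfolding z_def l_def by simp
qed

lemma hermitian_eigenvector_in_invariant_subspace: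
  assumes H: "hermitian_mat A" and S: "vec.subspace S" and inv: "\<forall>x\<in>S. A *v x \<in> S"
    and nontriv: "\<exists>x\<in>S. x \<noteq> 0"
  obtains v l where "v \<in> S" "cinner v v = 1" "A *v v = complex_of_real l *s v"
proof -
  define Q where "Q = (\<lambda>x. Re (quad_form A x))"
  have Sr: "subspace S" using subspace_if_vec_subspace[OF S] .
  define K where "K = S \<inter> sphere 0 1"
  have cK: "compact K" unfolding K_def using closed_subspace[OF Sr] by (intro closed_Int_compact) auto
  from nontriv obtain x0 where x0: "x0 \<in> S" "x0 \<noteq> 0" by auto
  have "(1 / norm x0) *\<^sub>R x0 \<in> K" unfolding K_def using x0 Sr by (auto intro: subspace_scale)
  then have neK: "K \<noteq> {}" by auto
  obtain v where v: "v \<in> K" "\<And>y. y \<in> K \<Longrightarrow> Q y \<le> Q v"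
    using continuous_attains_sup[OF cK neK continuous_on_subset[OF continuous_on_quad_form[of A]]]
    unfolding Q_def by auto
  have vS: "v \<in> S" and nv: "norm v = 1" using v(1) unfolding K_def by auto
  have "Q x \<le> Q v * (norm x)^2" if "x \<in> S" for x
  proof (cases "x = 0")
    case True then show ?thesis by (simp add: Q_def quad_form_cinner)
  next
    case False
    define y where "y = (1 / norm x) *\<^sub>R x"
    have "y \<in> K" unfolding K_def y_def using that False Sr by (auto intro: subspace_scale)
    then have "Q y \<le> Q v" using v(2) by auto
    moreover have "Q y = Q x / (norm x)^2" unfolding Q_def y_def Re_quad_form_scaleR
      by (simp add: power_divide)
    ultimately show ?thesis using False by (simp add: divide_le_eq mult.commute)
  qed
  then have "A *v v = complex_of_real (Q v) *s v"
    unfolding Q_def by (intro rayleigh_maximiser_eigenvector[OF H S inv vS nv])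
  moreover have "cinner v v = 1" using nv by (simp add: cinner_self)
  ultimately show thesis using that vS by blast
qed

definition orthonormal :: "(complex^'n) set \<Rightarrow> bool" where
  "orthonormal E \<longleftrightarrow> (\<forall>e\<in>E. cinner e e = 1) \<and> (\<forall>e\<in>E. \<forall>e'\<in>E. e \<noteq> e' \<longrightarrow> cinner e e' = 0)"

lemma orthonormal_insert:
  assumes "orthonormal E" "cinner v v = 1" "\<And>e. e \<in> E \<Longrightarrow> cinner v e = 0"
  shows "orthonormal (insert v E)"
proof -
  have "cinner e v = 0" if "e \<in> E" for e
    using assms(3)[OF that] cinner_commute[of e v] by simp
  then show ?thesis using assms unfolding orthonormal_def by auto
qed

lemma subset_span_insert_orthogonal:
  assumes S: "vec.subspace S" and v: "v \<in> S" "cinner v v = 1"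
    and span: "{x \<in> S. cinner v x = 0} \<subseteq> vec.span E"
  shows "S \<subseteq> vec.span (insert v E)"
proof
  fix x assume x: "x \<in> S"
  define c where "c = cinner v x"
  have "x - c *s v \<in> {x \<in> S. cinner v x = 0}"
    unfolding c_def using x v S
    by (auto simp: cinner_diff_right cinner_scale_right intro: vec.subspace_diff vec.subspace_scale)
  then have "x - c *s v \<in> vec.span (insert v E)"
    using span vec.span_mono[of E "insert v E"] by auto
  moreover have "c *s v \<in> vec.span (insert v E)"
    by (intro vec.span_scale vec.span_base) simp
  ultimately have "(x - c *s v) + c *s v \<in> vec.span (insert v E)" by (rule vec.span_add)
  then show "x \<in> vec.span (insert v E)" by simp
qed

text \<open>Induction on the dimension of an invariant subspace: the orthogonal complement of an
  eigenvector within it is again invariant, because \<open>A\<close> is Hermitian.\<close>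
lemma hermitian_orthonormal_eigenbasis:
  assumes H: "hermitian_mat A"
  shows "vec.subspace S \<Longrightarrow> (\<forall>x\<in>S. A *v x \<in> S) \<Longrightarrow>
    \<exists>E. finite E \<and> E \<subseteq> S \<and> orthonormal E \<and> (\<forall>e\<in>E. \<exists>l::real. A *v e = complex_of_real l *s e)
      \<and> S \<subseteq> vec.span E"
proof (induction "vec.dim S" arbitrary: S rule: less_induct)
  case less
  show ?case
  proof (cases "\<exists>x\<in>S. x \<noteq> 0")
    case False
    then have "S \<subseteq> vec.span {}" by auto
    then show ?thesis by (intro exI[of _ "{}"]) (auto simp: orthonormal_def)
  next
    case True
    obtain v l where v: "v \<in> S" "cinner v v = 1" "A *v v = complex_of_real l *s v"
      using hermitian_eigenvector_in_invariant_subspace[OF H less.prems True] by auto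
    define S' where "S' = {x\<in>S. cinner v x = 0}"
    have sub': "vec.subspace S'"
      using less.prems(1) unfolding S'_def vec.subspace_def
      by (auto simp: cinner_add_right cinner_scale_right)
    have inv': "\<forall>x\<in>S'. A *v x \<in> S'"
    proof
      fix x assume x: "x \<in> S'"
      have "cinner v (A *v x) = cinner (A *v v) x" by (rule hermitian_cinner[OF H])
      also have "\<dots> = 0" using x unfolding v(3) cinner_scale_left S'_def by simp
      finally show "A *v x \<in> S'" using x less.prems(2) unfolding S'_def by auto
    qed
    have "v \<notin> S'" unfolding S'_def using v by auto
    then have "S' \<subset> S" using v unfolding S'_def by blast
    then have "vec.span S' \<subset> vec.span S"
      using sub' less.prems(1) by (simp add: vec.span_eq_iff[THEN iffD2])
    then have "vec.dim S' < vec.dim S" by (rule vec.dim_psubset)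
    then obtain E' where E': "finite E'" "E' \<subseteq> S'" "orthonormal E'"
      "\<forall>e\<in>E'. \<exists>l::real. A *v e = complex_of_real l *s e" "S' \<subseteq> vec.span E'"
      using less.hyps[OF _ sub' inv'] by blast
    have orth: "orthonormal (insert v E')"
      using E'(2,3) v(2) unfolding S'_def by (intro orthonormal_insert) auto
    have span: "S \<subseteq> vec.span (insert v E')"
      using less.prems(1) v(1,2) E'(5) unfolding S'_def by (rule subset_span_insert_orthogonal)
    show ?thesis
      using E' v orth span unfolding S'_def by (intro exI[of _ "insert v E'"]) auto
  qed
qed

lemma matrix_mult_diag_mat_nth: "(M ** diag_mat d) $ i $ j = M $ i $ j * d j"
  unfolding matrix_matrix_mult_def diag_mat_def
  by (simp add: if_distrib[of "\<lambda>x. _ * x"] cong: if_cong)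

lemma diag_mat_matrix_mult_nth: "(diag_mat d ** M) $ i $ j = d i * M $ i $ j"
  unfolding matrix_matrix_mult_def diag_mat_def
  by (simp add: if_distrib[of "\<lambda>x. x * _"] cong: if_cong)

lemma adjoint_mat_nth: "adjoint_mat M $ i $ j = cnj (M $ j $ i)"
  by (simp add: adjoint_mat_def)

lemma mat_1_nth: "(mat 1 :: complex^'n^'n) $ i $ j = (if i = j then 1 else 0)"
  by (simp add: mat_def)

lemma unitary_mat_right: "unitary_mat U \<Longrightarrow> U ** adjoint_mat U = mat 1"
  unfolding unitary_mat_def using matrix_left_right_inverse by blast

lemma orthonormal_independent:
  assumes fin: "finite E" and on: "orthonormal E"
  shows "vec.independent E"
  unfolding vec.independent_explicit
proof (intro conjI allI impI ballI fin)
  fix c v assume s: "(\<Sum>v\<in>E. c v *s v) = 0" and v: "v \<in> E"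
  have "0 = cinner v (\<Sum>e\<in>E. c e *s e)" using s by simp
  also have "\<dots> = (\<Sum>e\<in>E. c e * cinner v e)" by (simp add: cinner_sum_right cinner_scale_right)
  also have "\<dots> = c v * cinner v v + (\<Sum>e\<in>E - {v}. c e * cinner v e)"
    by (rule sum.remove[OF fin v])
  also have "(\<Sum>e\<in>E - {v}. c e * cinner v e) = 0"
    using on v unfolding orthonormal_def by (intro sum.neutral) auto
  also have "c v * cinner v v + 0 = c v" using on v by (simp add: orthonormal_def)
  finally show "c v = 0" by simp
qed

lemma unitary_mat_orthonormal_columns:
  fixes \<phi> :: "'n::finite \<Rightarrow> complex^'n"
  assumes E: "orthonormal E" and \<phi>: "inj \<phi>" "range \<phi> \<subseteq> E"
  shows "unitary_mat (\<chi> i j. \<phi> j $ i)"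
  unfolding unitary_mat_def
proof (subst vec_eq_iff, intro allI, subst vec_eq_iff, intro allI)
  fix i j
  have prod: "(adjoint_mat (\<chi> i j. \<phi> j $ i) ** (\<chi> i j. \<phi> j $ i)) $ i $ j = cinner (\<phi> i) (\<phi> j)"
    by (simp add: matrix_matrix_mult_def adjoint_mat_def cinner_def)
  have "\<phi> i \<in> E" "\<phi> j \<in> E" using \<phi>(2) by auto
  moreover have "\<phi> i = \<phi> j \<longleftrightarrow> i = j" using \<phi>(1) by (auto dest: injD)
  ultimately have "cinner (\<phi> i) (\<phi> j) = (if i = j then 1 else 0)"
    using E by (auto simp: orthonormal_def)
  then show "(adjoint_mat (\<chi> i j. \<phi> j $ i) ** (\<chi> i j. \<phi> j $ i)) $ i $ j = mat 1 $ i $ j"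
    unfolding prod by (simp add: mat_1_nth)
qed

lemma hermitian_unitary_diagonalization:
  fixes A :: "complex^'n^'n"
  assumes H: "hermitian_mat A"
  obtains U and lam :: "'n \<Rightarrow> real"
  where "unitary_mat U" "A = U ** diag_mat (\<lambda>i. complex_of_real (lam i)) ** adjoint_mat U"
proof -
  obtain E where E: "finite E" "orthonormal E" "\<forall>e\<in>E. \<exists>l::real. A *v e = complex_of_real l *s e"
    "UNIV \<subseteq> vec.span E"
    using hermitian_orthonormal_eigenbasis[OF H, of UNIV] by (auto simp: vec.subspace_UNIV)
  have "card E = vec.dim (UNIV :: (complex^'n) set)"
    using E orthonormal_independent[OF E(1,2)] by (intro vec.basis_card_eq_dim) auto
  then have "card (UNIV :: 'n set) = card E" by (simp add: vec_dim_card card_cart_basis)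
  then obtain \<phi> where \<phi>: "bij_betw \<phi> (UNIV :: 'n set) E"
    using finite_same_card_bij[OF finite E(1)] by blast
  define lam where "lam = (\<lambda>j. SOME l::real. A *v \<phi> j = complex_of_real l *s \<phi> j)"
  have lam: "A *v \<phi> j = complex_of_real (lam j) *s \<phi> j" for j
  proof -
    have "\<phi> j \<in> E" using \<phi> by (auto simp: bij_betw_def)
    then have "\<exists>l::real. A *v \<phi> j = complex_of_real l *s \<phi> j" using E(3) by auto
    then show ?thesis unfolding lam_def by (rule someI_ex)
  qed
  define U :: "complex^'n^'n" where "U = (\<chi> i j. \<phi> j $ i)"
  define D where "D = diag_mat (\<lambda>i. complex_of_real (lam i))"
  have uni: "unitary_mat U"
    unfolding U_def using E(2) \<phi> by (intro unitary_mat_orthonormal_columns) (auto simp: bij_betw_def)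
  have AU: "A ** U = U ** D"
  proof (subst vec_eq_iff, intro allI, subst vec_eq_iff, intro allI)
    fix i j
    have "(A ** U) $ i $ j = (A *v \<phi> j) $ i"
      by (simp add: matrix_matrix_mult_def matrix_vector_mult_def U_def)
    also have "\<dots> = complex_of_real (lam j) * \<phi> j $ i" by (simp add: lam)
    also have "\<dots> = (U ** D) $ i $ j" unfolding D_def matrix_mult_diag_mat_nth by (simp add: U_def)
    finally show "(A ** U) $ i $ j = (U ** D) $ i $ j" .
  qed
  have "A = A ** (U ** adjoint_mat U)" using unitary_mat_right[OF uni] by simp
  also have "\<dots> = U ** D ** adjoint_mat U" by (metis AU matrix_mul_assoc)
  finally show thesis using that uni unfolding D_def by blast
qed

lemma adjoint_mat_mult: "adjoint_mat (A ** B) = adjoint_mat B ** adjoint_mat (A :: complex^'n^'n)"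
  by (simp add: vec_eq_iff adjoint_mat_def matrix_matrix_mult_def mult.commute)

lemma adjoint_mat_adjoint_mat[simp]: "adjoint_mat (adjoint_mat A) = A"
  by (simp add: vec_eq_iff adjoint_mat_def)

lemma adjoint_mat_real_diag: "adjoint_mat (diag_mat (\<lambda>i. complex_of_real (d i))) = diag_mat (\<lambda>i. complex_of_real (d i))"
  by (simp add: vec_eq_iff adjoint_mat_def diag_mat_def)

lemma unitary_mat_adjoint_mult:
  assumes "unitary_mat U" "unitary_mat V"
  shows "unitary_mat (adjoint_mat V ** U)"
proof -
  have "adjoint_mat (adjoint_mat V ** U) ** (adjoint_mat V ** U) = adjoint_mat U ** ((V ** adjoint_mat V) ** U)"
    by (simp add: adjoint_mat_mult matrix_mul_assoc)
  also have "\<dots> = mat 1" using assms unitary_mat_right[OF assms(2)] by (simp add: unitary_mat_def)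
  finally show ?thesis unfolding unitary_mat_def .
qed

lemma unitary_mat_row_norm:
  assumes "unitary_mat W"
  shows "(\<Sum>j\<in>UNIV. (cmod (W $ i $ j))^2) = 1"
proof -
  have "(W ** adjoint_mat W) $ i $ i = 1" using unitary_mat_right[OF assms] by (simp add: mat_1_nth)
  then have "(\<Sum>j\<in>UNIV. complex_of_real ((cmod (W $ i $ j))^2)) = 1"
    by (simp add: matrix_matrix_mult_def adjoint_mat_def complex_norm_square del: of_real_power)
  then have "complex_of_real (\<Sum>j\<in>UNIV. (cmod (W $ i $ j))^2) = 1" by (simp only: of_real_sum)
  then show ?thesis by (simp only: of_real_eq_1_iff)
qed

lemma unitary_mat_col_norm:
  assumes "unitary_mat W"
  shows "(\<Sum>i\<in>UNIV. (cmod (W $ i $ j))^2) = 1"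
proof -
  have "(adjoint_mat W ** W) $ j $ j = 1" using assms by (simp add: unitary_mat_def mat_1_nth)
  then have "(\<Sum>i\<in>UNIV. complex_of_real ((cmod (W $ i $ j))^2)) = 1"
    by (simp add: matrix_matrix_mult_def adjoint_mat_def cnj_mult_self del: of_real_power)
  then have "complex_of_real (\<Sum>i\<in>UNIV. (cmod (W $ i $ j))^2) = 1" by (simp only: of_real_sum)
  then show ?thesis by (simp only: of_real_eq_1_iff)
qed

text \<open>Needed because \<open>mat_fun\<close> picks an arbitrary diagonalisation. Two diagonalisations are
  intertwined by the unitary \<open>W = V* U\<close>, so \<open>W i j = 0\<close> unless \<open>c i = a j\<close>, and the doubly
  stochastic weights \<open>\<bar>W i j\<bar>^2\<close> match the two sums.\<close>
lemma sum_eigenvalues_unique: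
  fixes U V :: "complex^'n^'n" and a c :: "'n \<Rightarrow> real" and g :: "real \<Rightarrow> real"
  assumes U: "unitary_mat U" and V: "unitary_mat V"
    and eq: "U ** diag_mat (\<lambda>i. complex_of_real (a i)) ** adjoint_mat U
           = V ** diag_mat (\<lambda>i. complex_of_real (c i)) ** adjoint_mat V"
  shows "(\<Sum>i\<in>UNIV. g (c i)) = (\<Sum>j\<in>UNIV. g (a j))"
proof -
  define Da where "Da = diag_mat (\<lambda>i. complex_of_real (a i))"
  define Dc where "Dc = diag_mat (\<lambda>i. complex_of_real (c i))"
  define W where "W = adjoint_mat V ** U"
  have Wu: "unitary_mat W" unfolding W_def using unitary_mat_adjoint_mult[OF U V] .
  have UU: "adjoint_mat U ** U = mat 1" using U by (simp add: unitary_mat_def)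
  have VV: "adjoint_mat V ** V = mat 1" using V by (simp add: unitary_mat_def)
  have "adjoint_mat V ** (U ** Da ** adjoint_mat U) ** U = W ** Da"
    unfolding W_def by (metis matrix_mul_assoc matrix_mul_rid UU)
  moreover have "adjoint_mat V ** (V ** Dc ** adjoint_mat V) ** U = Dc ** W"
  proof -
    have "adjoint_mat V ** (V ** Dc ** adjoint_mat V) ** U = (adjoint_mat V ** V) ** Dc ** (adjoint_mat V ** U)"
      by (simp add: matrix_mul_assoc)
    then show ?thesis unfolding W_def VV by simp
  qed
  ultimately have comm: "Dc ** W = W ** Da" using eq unfolding Da_def Dc_def by simp
  define P where "P = (\<lambda>i j. (cmod (W $ i $ j))^2)"
  have Pz: "P i j = 0 \<or> c i = a j" for i j
  proof -
    have "(Dc ** W) $ i $ j = (W ** Da) $ i $ j" using comm by simp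
    then have "complex_of_real (c i) * W $ i $ j = W $ i $ j * complex_of_real (a j)"
      unfolding Dc_def Da_def diag_mat_matrix_mult_nth matrix_mult_diag_mat_nth .
    then have "W $ i $ j = 0 \<or> c i = a j" by (auto simp: mult.commute)
    then show ?thesis unfolding P_def by auto
  qed
  have "(\<Sum>i\<in>UNIV. g (c i)) = (\<Sum>i\<in>UNIV. (\<Sum>j\<in>UNIV. P i j) * g (c i))"
    using unitary_mat_row_norm[OF Wu] unfolding P_def by simp
  also have "\<dots> = (\<Sum>i\<in>UNIV. \<Sum>j\<in>UNIV. P i j * g (a j))"
    unfolding sum_distrib_right
  proof (intro sum.cong refl)
    fix i j show "P i j * g (c i) = P i j * g (a j)" using Pz[of i j] by auto
  qed
  also have "\<dots> = (\<Sum>j\<in>UNIV. \<Sum>i\<in>UNIV. P i j * g (a j))" by (rule sum.swap)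
  also have "\<dots> = (\<Sum>j\<in>UNIV. (\<Sum>i\<in>UNIV. P i j) * g (a j))" by (simp add: sum_distrib_right)
  also have "\<dots> = (\<Sum>j\<in>UNIV. g (a j))" using unitary_mat_col_norm[OF Wu] unfolding P_def by simp
  finally show ?thesis .
qed

lemma trace_diag_mat: "trace (diag_mat d) = (\<Sum>i\<in>UNIV. d i)"
  by (simp add: trace_def diag_mat_def)

lemma trace_unitary_conj:
  assumes U: "unitary_mat U"
  shows "trace (U ** D ** adjoint_mat U) = trace (D :: complex^'n^'n)"
proof -
  have "trace (U ** D ** adjoint_mat U) = trace (U ** (D ** adjoint_mat U))" by (simp add: matrix_mul_assoc)
  also have "\<dots> = trace ((D ** adjoint_mat U) ** U)" by (rule trace_mul_sym)
  also have "\<dots> = trace D" using U unfolding unitary_mat_def by (metis matrix_mul_assoc matrix_mul_rid)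
  finally show ?thesis .
qed

lemma Re_trace_mat_fun:
  fixes A U :: "complex^'n^'n" and c :: "'n \<Rightarrow> real"
  assumes U: "unitary_mat U" and A: "A = U ** diag_mat (\<lambda>i. complex_of_real (c i)) ** adjoint_mat U"
  shows "Re (trace (mat_fun g A)) = (\<Sum>j\<in>UNIV. g (c j))"
proof -
  let ?P = "\<lambda>M. \<exists>U (lam :: 'n \<Rightarrow> real).
      unitary_mat U \<and> A = U ** diag_mat (\<lambda>i. complex_of_real (lam i)) ** adjoint_mat U \<and>
      M = U ** diag_mat (\<lambda>i. complex_of_real (g (lam i))) ** adjoint_mat U"
  have "?P (U ** diag_mat (\<lambda>i. complex_of_real (g (c i))) ** adjoint_mat U)" using U A by blast
  then have "?P (mat_fun g A)" unfolding mat_fun_def by (rule someI)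
  then obtain V lam where V: "unitary_mat V" "A = V ** diag_mat (\<lambda>i. complex_of_real (lam i)) ** adjoint_mat V"
    "mat_fun g A = V ** diag_mat (\<lambda>i. complex_of_real (g (lam i))) ** adjoint_mat V" by blast
  have "Re (trace (mat_fun g A)) = (\<Sum>i\<in>UNIV. g (lam i))"
    unfolding V(3) trace_unitary_conj[OF V(1)] trace_diag_mat by (simp add: Re_sum)
  also have "\<dots> = (\<Sum>j\<in>UNIV. g (c j))"
    by (rule sum_eigenvalues_unique[OF U V(1)]) (use A V(2) in simp)
  finally show ?thesis .
qed

lemma Re_trace_mult_unitary_diag:
  fixes U V :: "complex^'n^'n" and a b :: "'n \<Rightarrow> real"
  assumes U: "unitary_mat U" and V: "unitary_mat V"
  shows "Re (trace ((V ** diag_mat (\<lambda>i. complex_of_real (a i)) ** adjoint_mat V) **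
                    (U ** diag_mat (\<lambda>i. complex_of_real (b i)) ** adjoint_mat U)))
       = (\<Sum>i\<in>UNIV. \<Sum>k\<in>UNIV. a i * b k * (cmod ((adjoint_mat V ** U) $ i $ k))^2)"
proof -
  define Da where "Da = diag_mat (\<lambda>i. complex_of_real (a i))"
  define Db where "Db = diag_mat (\<lambda>i. complex_of_real (b i))"
  define W where "W = adjoint_mat V ** U"
  have aW: "adjoint_mat W = adjoint_mat U ** V" unfolding W_def by (simp add: adjoint_mat_mult)
  have "trace ((V ** Da ** adjoint_mat V) ** (U ** Db ** adjoint_mat U))
      = trace (V ** (Da ** adjoint_mat V ** (U ** Db ** adjoint_mat U)))" by (simp add: matrix_mul_assoc)
  also have "\<dots> = trace ((Da ** adjoint_mat V ** (U ** Db ** adjoint_mat U)) ** V)" by (rule trace_mul_sym)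
  also have "(Da ** adjoint_mat V ** (U ** Db ** adjoint_mat U)) ** V = Da ** W ** Db ** adjoint_mat W"
    unfolding aW unfolding W_def by (simp add: matrix_mul_assoc)
  also have "trace (Da ** W ** Db ** adjoint_mat W)
      = (\<Sum>i\<in>UNIV. \<Sum>k\<in>UNIV. complex_of_real (a i * b k * (cmod (W $ i $ k))^2))"
  proof -
    have "trace (Da ** W ** Db ** adjoint_mat W) = (\<Sum>i\<in>UNIV. \<Sum>k\<in>UNIV. (Da ** W ** Db) $ i $ k * adjoint_mat W $ k $ i)"
      by (simp add: trace_def matrix_matrix_mult_def)
    also have "\<dots> = (\<Sum>i\<in>UNIV. \<Sum>k\<in>UNIV. complex_of_real (a i * b k * (cmod (W $ i $ k))^2))"
    proof (intro sum.cong refl)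
      fix i k
      have "(Da ** W ** Db) $ i $ k * adjoint_mat W $ k $ i
          = complex_of_real (a i) * complex_of_real (b k) * (cnj (W $ i $ k) * W $ i $ k)"
        unfolding Da_def Db_def matrix_mult_diag_mat_nth diag_mat_matrix_mult_nth adjoint_mat_nth by (simp add: algebra_simps)
      also have "\<dots> = complex_of_real (a i * b k * (cmod (W $ i $ k))^2)"
        unfolding cnj_mult_self by simp
      finally show "(Da ** W ** Db) $ i $ k * adjoint_mat W $ k $ i = complex_of_real (a i * b k * (cmod (W $ i $ k))^2)" .
    qed
    finally show ?thesis .
  qed
  finally show ?thesis unfolding Da_def Db_def W_def by (simp add: Re_sum)
qed

lemma quad_form_unitary_column:
  fixes U B :: "complex^'n^'n" and b :: "'n \<Rightarrow> real"
  assumes U: "unitary_mat U" and B: "B = U ** diag_mat (\<lambda>i. complex_of_real (b i)) ** adjoint_mat U"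
  shows "Re (quad_form B (\<chi> i. U $ i $ j)) = b j" "(\<chi> i. U $ i $ j) \<noteq> 0"
proof -
  define u where "u = (\<chi> i. U $ i $ j)"
  have UU: "adjoint_mat U ** U = mat 1" using U by (simp add: unitary_mat_def)
  have BU: "B ** U = U ** diag_mat (\<lambda>i. complex_of_real (b i))"
    unfolding B by (metis matrix_mul_assoc matrix_mul_rid UU)
  have Bu: "(B *v u) $ i = U $ i $ j * complex_of_real (b j)" for i
  proof -
    have "(B *v u) $ i = (B ** U) $ i $ j" by (simp add: u_def matrix_vector_mult_def matrix_matrix_mult_def)
    then show ?thesis unfolding BU matrix_mult_diag_mat_nth .
  qed
  have uu: "(\<Sum>i\<in>UNIV. cnj (U $ i $ j) * U $ i $ j) = 1"
    using arg_cong[OF UU, of "\<lambda>M. M $ j $ j"] by (simp add: matrix_matrix_mult_def adjoint_mat_def mat_1_nth)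
  have "quad_form B u = (\<Sum>i\<in>UNIV. cnj (U $ i $ j) * U $ i $ j) * complex_of_real (b j)"
    unfolding quad_form_def Bu by (simp add: u_def sum_distrib_right mult.assoc)
  then show "Re (quad_form B (\<chi> i. U $ i $ j)) = b j" unfolding u_def[symmetric] uu by simp
  have "cinner u u = 1" unfolding cinner_def u_def using uu by simp
  then show "(\<chi> i. U $ i $ j) \<noteq> 0" unfolding u_def[symmetric] by auto
qed

lemma psd_mat_eigenvalue_nonneg:
  assumes "psd_mat B" "unitary_mat U" "B = U ** diag_mat (\<lambda>i. complex_of_real (b i)) ** adjoint_mat U"
  shows "b j \<ge> 0"
  using quad_form_unitary_column(1)[OF assms(2,3), of j] assms(1) unfolding psd_mat_def by metis

lemma pd_mat_eigenvalue_pos: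
  assumes "pd_mat B" "unitary_mat U" "B = U ** diag_mat (\<lambda>i. complex_of_real (b i)) ** adjoint_mat U"
  shows "b j > 0"
  using quad_form_unitary_column[OF assms(2,3), of j] assms(1) unfolding pd_mat_def by metis

lemma Re_quad_form_unitary_diag:
  fixes U :: "complex^'n^'n" and a :: "'n \<Rightarrow> real"
  shows "Re (quad_form (U ** diag_mat (\<lambda>i. complex_of_real (a i)) ** adjoint_mat U) x)
    = (\<Sum>k\<in>UNIV. a k * (cmod ((adjoint_mat U *v x) $ k))^2)"
proof -
  define Da where "Da = diag_mat (\<lambda>i. complex_of_real (a i))"
  define y where "y = adjoint_mat U *v x"
  have Dy: "(Da *v y) $ k = complex_of_real (a k) * y $ k" for k
    unfolding Da_def matrix_vector_mult_def diag_mat_def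
    by (simp add: if_distrib[of "\<lambda>x. x * _"] cong: if_cong)
  have "(U ** Da ** adjoint_mat U) *v x = U *v (Da *v y)" unfolding y_def by (metis matrix_vector_mul_assoc)
  then have "quad_form (U ** Da ** adjoint_mat U) x = cinner x (U *v (Da *v y))"
    unfolding quad_form_cinner by simp
  also have "\<dots> = cinner y (Da *v y)" unfolding cinner_adjoint y_def ..
  also have "\<dots> = (\<Sum>k\<in>UNIV. complex_of_real (a k * (cmod (y $ k))^2))"
    unfolding cinner_def Dy
  proof (intro sum.cong refl)
    fix k show "cnj (y $ k) * (complex_of_real (a k) * y $ k) = complex_of_real (a k * (cmod (y $ k))^2)"
      using cnj_mult_self[of "y $ k"] by (simp add: algebra_simps)
  qed
  finally show ?thesis unfolding Da_def y_def by (simp add: Re_sum)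
qed

lemma pd_mat_unitary_diag:
  fixes U :: "complex^'n^'n" and a :: "'n \<Rightarrow> real"
  assumes U: "unitary_mat U" and a: "\<And>j. a j > 0"
  shows "pd_mat (U ** diag_mat (\<lambda>i. complex_of_real (a i)) ** adjoint_mat U)"
  unfolding pd_mat_def
proof (intro conjI allI impI)
  show "hermitian_mat (U ** diag_mat (\<lambda>i. complex_of_real (a i)) ** adjoint_mat U)"
    unfolding hermitian_mat_def adjoint_mat_mult adjoint_mat_real_diag adjoint_mat_adjoint_mat
    by (simp add: matrix_mul_assoc)
  fix x :: "complex^'n" assume x: "x \<noteq> 0"
  have "U *v (adjoint_mat U *v x) = x"
    unfolding matrix_vector_mul_assoc unitary_mat_right[OF U] by simp
  then have "adjoint_mat U *v x \<noteq> 0" using x by auto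
  then obtain i where i: "(adjoint_mat U *v x) $ i \<noteq> 0" by (auto simp: vec_eq_iff)
  have "0 < (\<Sum>k\<in>UNIV. a k * (cmod ((adjoint_mat U *v x) $ k))^2)"
    by (rule sum_pos2[of UNIV i]) (use i a in \<open>auto intro: mult_pos_pos simp: less_imp_le\<close>)
  then show "0 < Re (quad_form (U ** diag_mat (\<lambda>i. complex_of_real (a i)) ** adjoint_mat U) x)"
    unfolding Re_quad_form_unitary_diag .
qed

section \<open>The trace variational formula\<close>

lemma tendsto_at_right_Inf_mono_on:
  fixes f :: "real \<Rightarrow> real"
  assumes mono: "mono_on {a<..} f" and bdd: "bdd_below (f ` {a<..})"
  shows "(f \<longlongrightarrow> Inf (f ` {a<..})) (at_right a)"
proof (rule tendstoI)
  fix e :: real assume e: "e > 0"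
  define L where "L = Inf (f ` {a<..})"
  obtain x0 where x0: "x0 > a" "f x0 < L + e"
    using cInf_less_iff[of "f ` {a<..}" "L + e"] bdd e unfolding L_def by auto
  show "eventually (\<lambda>x. dist (f x) L < e) (at_right a)"
    unfolding eventually_at_right_field
  proof (intro exI[of _ x0] conjI allI impI x0)
    fix y :: real assume y: "a < y" "y < x0"
    have "f y \<le> f x0" using y x0 by (intro mono_onD[OF mono]) auto
    moreover have "L \<le> f y" unfolding L_def using bdd y by (intro cInf_lower) auto
    ultimately show "dist (f y) L < e" using x0 by (simp add: dist_real_def)
  qed
qed

lemma bdd_below_F_convex_incr:
  assumes "F_convex_incr f"
  shows "bdd_below (f ` {0<..})"
  using F_convex_incr_lower_bound[OF assms] by (intro bdd_belowI2) auto

lemma ext0_zero_eq_Inf: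
  assumes F: "F_convex_incr f"
  shows "ext0 f 0 = Inf (f ` {0<..})"
proof -
  have "(f \<longlongrightarrow> Inf (f ` {0<..})) (at_right 0)"
    using F_convex_incrD(1)[OF F] bdd_below_F_convex_incr[OF F] by (rule tendsto_at_right_Inf_mono_on)
  then show ?thesis unfolding ext0_def by (simp add: tendsto_Lim trivial_limit_at_right_real)
qed

lemma ext0_fenchel_young:
  assumes F: "F_convex_incr f" and a: "a > 0" and b: "b \<ge> 0"
  shows "a * b \<le> conj_fun f a + ext0 f b"
proof (cases "b > 0")
  case True
  then show ?thesis using conj_fun_ge[OF F a True] by (simp add: ext0_def mult.commute)
next
  case False
  then have b0: "b = 0" using b by simp
  have "- conj_fun f a \<le> Inf (f ` {0<..})"
  proof (rule cInf_greatest)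
    fix y assume "y \<in> f ` {0<..}"
    then obtain x where x: "x > 0" "y = f x" by auto
    have "x * a - f x \<le> conj_fun f a" using conj_fun_ge[OF F a x(1)] .
    moreover have "0 \<le> x * a" using x a by simp
    ultimately show "- conj_fun f a \<le> y" using x by simp
  qed simp
  then show ?thesis using b0 ext0_zero_eq_Inf[OF F] by simp
qed

lemma conj_fun_near_zero_le:
  assumes F: "F_convex_incr f" and e: "e > 0"
  obtains a where "a > 0" "conj_fun f a \<le> e - Inf (f ` {0<..})"
proof -
  define L where "L = Inf (f ` {0<..})"
  have lb: "\<And>x. x > 0 \<Longrightarrow> L \<le> f x"
    unfolding L_def using bdd_below_F_convex_incr[OF F] by (intro cInf_lower) auto
  obtain N where N: "N > 0" "\<And>x. x \<ge> N \<Longrightarrow> 1 * x \<le> f x"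
    using F_convex_incr_ge_linear[OF F, where M = 1] by blast
  \<comment> \<open>beyond \<open>X\<close> the term \<open>x * a - f x\<close> is negative by superlinearity; below \<open>X\<close> it is at most \<open>X * a - L\<close>\<close>
  define X where "X = max N (2 * \<bar>L\<bar> + 1)"
  have X: "X > 0" unfolding X_def using N by auto
  define a where "a = min (1/2) (e / (2 * X))"
  have a: "a > 0" "a \<le> 1/2" "X * a \<le> e / 2" unfolding a_def using e X
    by (auto simp: min_def field_simps)
  have "conj_fun f a \<le> e / 2 - L"
  proof (rule conj_fun_le)
    fix x :: real assume x: "x > 0"
    show "x * a - f x \<le> e / 2 - L"
    proof (cases "x \<ge> X")
      case True
      then have "x \<le> f x" using N(2)[of x] unfolding X_def by auto
      moreover have "x * a \<le> x * (1/2)" using x a by (intro mult_left_mono) auto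
      moreover have "2 * \<bar>L\<bar> + 1 \<le> x" using True unfolding X_def by auto
      ultimately show ?thesis using e by linarith
    next
      case False
      then have "x * a \<le> X * a" using a by (intro mult_right_mono) auto
      then show ?thesis using a(3) lb[OF x] by linarith
    qed
  qed
  then show thesis using that a e unfolding L_def by auto
qed

lemma ext0_approx_by_conj:
  assumes F: "F_convex_incr f" and b: "b \<ge> 0" and e: "e > 0"
  obtains a where "a > 0" "ext0 f b - e < a * b - conj_fun f a"
proof (cases "b > 0")
  case True
  have "f b - e < conj_fun (conj_fun f) b" using conj_fun_conj_fun[OF F True] e by simp
  then have "f b - e < (SUP x\<in>{0<..}. x * b - conj_fun f x)" unfolding conj_fun_def[of "conj_fun f"] .
  then obtain a where "a > 0" "f b - e < a * b - conj_fun f a"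
    using less_cSUP_iff[OF _ bdd_above_conj_fun[OF F_convex_incr_conj_fun[OF F] True]] by auto
  then show thesis using that True by (auto simp: ext0_def)
next
  case False
  then have "b = 0" using b by simp
  obtain a where "a > 0" "conj_fun f a \<le> e / 2 - Inf (f ` {0<..})"
    using conj_fun_near_zero_le[OF F, of "e / 2"] e by auto
  then show thesis using that \<open>b = 0\<close> e ext0_zero_eq_Inf[OF F] by auto
qed

lemma trace_mat_fun_conj_dual_le:
  fixes A B U :: "complex^'n^'n" and b :: "'n \<Rightarrow> real"
  assumes F: "F_convex_incr f" and U: "unitary_mat U"
    and B: "B = U ** diag_mat (\<lambda>i. complex_of_real (b i)) ** adjoint_mat U" and b: "\<And>j. b j \<ge> 0"
    and A: "pd_mat A"
  shows "Re (trace (A ** B)) - Re (trace (mat_fun (conj_fun f) A)) \<le> (\<Sum>j\<in>UNIV. ext0 f (b j))"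
proof -
  obtain V a where V: "unitary_mat V" and Ad: "A = V ** diag_mat (\<lambda>i. complex_of_real (a i)) ** adjoint_mat V"
    using hermitian_unitary_diagonalization[of A] A by (auto simp: pd_mat_def)
  have a: "\<And>i. a i > 0" using pd_mat_eigenvalue_pos[OF A V Ad] .
  define W where "W = adjoint_mat V ** U"
  have W: "unitary_mat W" unfolding W_def using unitary_mat_adjoint_mult[OF U V] .
  \<comment> \<open>the weights \<open>P i k\<close> form a doubly stochastic matrix\<close>
  define P where "P = (\<lambda>i k. (cmod (W $ i $ k))^2)"
  have "Re (trace (A ** B)) = (\<Sum>i\<in>UNIV. \<Sum>k\<in>UNIV. a i * b k * P i k)"
    unfolding Ad B P_def W_def by (rule Re_trace_mult_unitary_diag[OF U V])
  also have "\<dots> \<le> (\<Sum>i\<in>UNIV. \<Sum>k\<in>UNIV. (conj_fun f (a i) + ext0 f (b k)) * P i k)"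
    unfolding P_def using ext0_fenchel_young[OF F a b] by (intro sum_mono mult_right_mono) auto
  also have "\<dots> = (\<Sum>i\<in>UNIV. \<Sum>k\<in>UNIV. conj_fun f (a i) * P i k)
      + (\<Sum>k\<in>UNIV. \<Sum>i\<in>UNIV. ext0 f (b k) * P i k)"
    by (simp add: distrib_right sum.distrib sum.swap[of "\<lambda>i k. ext0 f (b k) * P i k"])
  also have "\<dots> = (\<Sum>i\<in>UNIV. conj_fun f (a i) * (\<Sum>k\<in>UNIV. P i k))
      + (\<Sum>k\<in>UNIV. ext0 f (b k) * (\<Sum>i\<in>UNIV. P i k))"
    by (simp add: sum_distrib_left)
  also have "\<dots> = Re (trace (mat_fun (conj_fun f) A)) + (\<Sum>j\<in>UNIV. ext0 f (b j))"
    unfolding P_def Re_trace_mat_fun[OF V Ad]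
    using unitary_mat_row_norm[OF W] unitary_mat_col_norm[OF W] by simp
  finally show ?thesis by simp
qed

lemma trace_mat_fun_conj_dual_approx:
  fixes B U :: "complex^'n^'n" and b :: "'n \<Rightarrow> real"
  assumes F: "F_convex_incr f" and U: "unitary_mat U"
    and B: "B = U ** diag_mat (\<lambda>i. complex_of_real (b i)) ** adjoint_mat U" and b: "\<And>j. b j \<ge> 0"
    and e: "e > 0"
  obtains A where "pd_mat A"
    "(\<Sum>j\<in>UNIV. ext0 f (b j)) - e < Re (trace (A ** B)) - Re (trace (mat_fun (conj_fun f) A))"
proof -
  define n where "n = real (CARD('n))"
  have n: "n > 0" unfolding n_def by simp
  have "\<forall>j. \<exists>a. a > 0 \<and> ext0 f (b j) - e / n < a * b j - conj_fun f a"
  proof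
    fix j
    have "e / n > 0" using e n by simp
    from ext0_approx_by_conj[OF F b this] show "\<exists>a. a > 0 \<and> ext0 f (b j) - e / n < a * b j - conj_fun f a"
      by blast
  qed
  then obtain a where "\<forall>j. a j > 0 \<and> ext0 f (b j) - e / n < a j * b j - conj_fun f (a j)"
    by (rule choice[THEN exE])
  then have a: "\<And>j. a j > 0" "\<And>j. ext0 f (b j) - e / n < a j * b j - conj_fun f (a j)"
    by auto
  \<comment> \<open>the near-optimal \<open>A\<close> commutes with \<open>B\<close>\<close>
  define A where "A = U ** diag_mat (\<lambda>i. complex_of_real (a i)) ** adjoint_mat U"
  have pd: "pd_mat A" unfolding A_def using pd_mat_unitary_diag[OF U a(1)] .
  have UU: "adjoint_mat U ** U = mat 1" using U by (simp add: unitary_mat_def)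
  have "Re (trace (A ** B)) = (\<Sum>i\<in>UNIV. \<Sum>k\<in>UNIV. if k = i then a i * b i else 0)"
    unfolding A_def B Re_trace_mult_unitary_diag[OF U U] UU mat_1_nth by (intro sum.cong) auto
  then have tr: "Re (trace (A ** B)) = (\<Sum>i\<in>UNIV. a i * b i)" by simp
  have "(\<Sum>j\<in>UNIV. ext0 f (b j)) - e = (\<Sum>j\<in>UNIV. ext0 f (b j) - e / n)"
    unfolding n_def using n by (simp add: sum_subtractf n_def)
  also have "\<dots> < (\<Sum>j\<in>UNIV. a j * b j - conj_fun f (a j))"
    using a(2) by (intro sum_strict_mono) auto
  also have "\<dots> = Re (trace (A ** B)) - Re (trace (mat_fun (conj_fun f) A))"
    unfolding tr Re_trace_mat_fun[OF U A_def] by (simp add: sum_subtractf)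
  finally show thesis by (rule that[OF pd])
qed

lemma Re_trace_mat_fun_ext0_eq_SUP:
  fixes B :: "complex^'n^'n"
  assumes F: "F_convex_incr f" and psd: "psd_mat B"
  shows "Re (trace (mat_fun (ext0 f) B)) =
        (SUP A\<in>{A :: complex^'n^'n. pd_mat A}.
            Re (trace (A ** B)) - Re (trace (mat_fun (conj_fun f) A)))"
proof -
  obtain U b where U: "unitary_mat U" and B: "B = U ** diag_mat (\<lambda>i. complex_of_real (b i)) ** adjoint_mat U"
    using hermitian_unitary_diagonalization[of B] psd by (auto simp: psd_mat_def)
  have b: "\<And>j. b j \<ge> 0" using psd_mat_eigenvalue_nonneg[OF psd U B] .
  define val where "val = (\<lambda>A :: complex^'n^'n. Re (trace (A ** B)) - Re (trace (mat_fun (conj_fun f) A)))"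
  have upper: "val A \<le> (\<Sum>j\<in>UNIV. ext0 f (b j))" if "pd_mat A" for A
    unfolding val_def using trace_mat_fun_conj_dual_le[OF F U B b that] .
  have bdd: "bdd_above (val ` {A. pd_mat A})" using upper by (intro bdd_aboveI2) auto
  have "(SUP A\<in>{A. pd_mat A}. val A) = (\<Sum>j\<in>UNIV. ext0 f (b j))"
  proof (rule antisym)
    show "(SUP A\<in>{A. pd_mat A}. val A) \<le> (\<Sum>j\<in>UNIV. ext0 f (b j))"
      using pd_mat_unitary_diag[OF U, of "\<lambda>_. 1"] upper by (intro cSUP_least) auto
    show "(\<Sum>j\<in>UNIV. ext0 f (b j)) \<le> (SUP A\<in>{A. pd_mat A}. val A)"
    proof (rule field_le_epsilon)
      fix e :: real assume "e > 0"
      then obtain A where "pd_mat A" "(\<Sum>j\<in>UNIV. ext0 f (b j)) - e < val A"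
        unfolding val_def using trace_mat_fun_conj_dual_approx[OF F U B b] by blast
      moreover have "val A \<le> (SUP A\<in>{A. pd_mat A}. val A)" using bdd \<open>pd_mat A\<close> by (intro cSUP_upper) auto
      ultimately show "(\<Sum>j\<in>UNIV. ext0 f (b j)) \<le> (SUP A\<in>{A. pd_mat A}. val A) + e" by linarith
    qed
  qed
  then show ?thesis unfolding Re_trace_mat_fun[OF U B] val_def by simp
qed

theorem lemmaA1:
  shows
   "(\<forall>f. F_convex_incr f \<longrightarrow>
        F_convex_incr (conj_fun f) \<and> (\<forall>x>0. conj_fun (conj_fun f) x = f x))
    \<and>
    (\<forall>f (B :: complex^'n^'n). F_convex_incr f \<longrightarrow> psd_mat B \<longrightarrow>
        Re (trace (mat_fun (ext0 f) B)) =
        (SUP A\<in>{A :: complex^'n^'n. pd_mat A}.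
            Re (trace (A ** B)) - Re (trace (mat_fun (conj_fun f) A))))
    \<and>
    (\<forall>(f :: real \<Rightarrow> real) (r :: real).
        mono_on {0<..} f \<longrightarrow> (\<exists>x>0. \<exists>y>0. f x \<noteq> f y) \<longrightarrow> 0 < r \<longrightarrow> r < 1 \<longrightarrow>
        (convex_on {0<..} (\<lambda>x. f (x powr (1 - r))) \<longleftrightarrow>
         F_convex_incr f \<and> concave_on {0<..} (\<lambda>x. conj_fun f (x powr r))))"
  by (intro conjI allI impI F_convex_incr_conj_fun conj_fun_conj_fun Re_trace_mat_fun_ext0_eq_SUP
      convex_powr_comp_iff) assumption+

end
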